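(* Let $K$ be a field of characteristic $\neq2$ with involution $a\mapsto\bar a$, let $\varepsilon\in\{1,-1\}$ with $\varepsilon=1$ if the involution is nonidentity, and let $\Phi$ be an $n\times n$ Frobenius block with characteristic polynomial $\chi(x)$. A nonsingular matrix $X$ with $X=X^*$ and $X\Phi=\varepsilon(X\Phi)^*$ exists if and only if (B1) $\chi(x)=\varepsilon^n\bar\chi(\varepsilon x)$, and (B2) $\chi(x)\notin\{x^2,x^4,x^6,\dots\}$ if $\varepsilon=-1$. When these hold, one can take $X=[\varepsilon^ia_{i+j}]_{i,j=1}^n$, where $(a_2,a_3,\dots,a_{2n})$ is the $\chi$-recurrent sequence determined by $(a_2,\dots,a_{n+1})=(1,0,\dots,0)$ if $\Phi$ is nonsingular and $(a_2,\dots,a_{n+1})=(0,\dots,0,1)$ if $\Phi$ is singular.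
   Context: $M^*=[\bar m_{ji}]$ for $M=[m_{ij}]$. For $f=a_0x^n+\dots+a_n$, $\bar f=\bar a_0x^n+\dots+\bar a_n$. A Frobenius block is an $n\times n$ matrix with ones on the subdiagonal, last column $(-c_n,\dots,-c_1)^T$, zeros elsewhere, and characteristic polynomial $x^n+c_1x^{n-1}+\dots+c_n$ a power of an irreducible polynomial. For $f(x)=\gamma_0x^m+\dots+\gamma_m$, a sequence $(a_q,\dots,a_r)$ is $f$-recurrent if $\gamma_0a_{l+m}+\gamma_1a_{l+m-1}+\dots+\gamma_ma_l=0$ for $q\le l\le r-m$. *)

theory Defs
  imports "Jordan_Normal_Form.Char_Poly" "HOL-Computational_Algebra.Polynomial_Factorial"
begin

definition is_involution :: "('a::field \<Rightarrow> 'a) \<Rightarrow> bool" where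
  "is_involution cj \<longleftrightarrow> (\<forall>a b. cj (a + b) = cj a + cj b) \<and> (\<forall>a b. cj (a * b) = cj a * cj b)
      \<and> (\<forall>a. cj (cj a) = a)"

definition star_mat :: "('a \<Rightarrow> 'a) \<Rightarrow> 'a mat \<Rightarrow> 'a mat" where
  "star_mat cj M = mat (dim_col M) (dim_row M) (\<lambda>(i, j). cj (M $$ (j, i)))"

definition bar_poly :: "('a::zero \<Rightarrow> 'a) \<Rightarrow> 'a poly \<Rightarrow> 'a poly" where
  "bar_poly cj f = map_poly cj f"

text \<open>The n x n companion-type matrix with ones on the subdiagonal and last column
  (-c_n, ..., -c_1)^T (0-indexed: entry (i, n-1) is -c_(n-i)).\<close>
definition frobenius_mat :: "nat \<Rightarrow> (nat \<Rightarrow> 'a::comm_ring_1) \<Rightarrow> 'a mat" where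
  "frobenius_mat n c = mat n n (\<lambda>(i, j).
      (if j = n - 1 then - c (n - i) else 0) + (if i = j + 1 then 1 else 0))"

definition frobenius_block :: "nat \<Rightarrow> 'a::field mat \<Rightarrow> bool" where
  "frobenius_block n \<Phi> \<longleftrightarrow> n \<ge> 1 \<and> (\<exists>c. \<Phi> = frobenius_mat n c) \<and>
      (\<exists>p k. irreducible p \<and> char_poly \<Phi> = p ^ k)"

definition recurrent :: "'a::comm_ring_1 poly \<Rightarrow> (nat \<Rightarrow> 'a) \<Rightarrow> nat \<Rightarrow> nat \<Rightarrow> bool" where
  "recurrent f a q r \<longleftrightarrow> (\<forall>l. q \<le> l \<and> l + degree f \<le> r \<longrightarrow>
      (\<Sum>i = 0..degree f. coeff f (degree f - i) * a (l + degree f - i)) = 0)"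

end

theory Submission
  imports Defs
begin

text \<open>Necessity: from \<open>X = X\<^sup>*\<close> and \<open>X\<Phi> = \<epsilon>(X\<Phi>)\<^sup>*\<close> one gets \<open>X\<Phi>X\<^sup>-\<^sup>1 = \<epsilon>\<Phi>\<^sup>*\<close>,
  so \<open>\<Phi>\<close> and \<open>\<epsilon>\<Phi>\<^sup>*\<close> have the same characteristic polynomial, which is (B1). If \<open>\<epsilon> = -1\<close>, the
  involution is the identity, \<open>X\<close> is symmetric and \<open>X\<Phi>\<close> skew-symmetric; if moreover
  \<open>\<chi> = x\<^sup>2\<^sup>m\<close>, then \<open>\<Phi>\<close> is the shift matrix and these symmetries force the last row of \<open>X\<close>
  to vanish.

  Sufficiency: up to the row signs \<open>\<epsilon>\<^sup>i\<close>, \<open>X\<close> is the Hankel matrix of the \<open>\<chi>\<close>-recurrent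
  sequence \<open>a\<close>. By (B1) the sequence \<open>s \<mapsto> \<epsilon>\<^sup>s cj(a\<^sub>s)\<close> is again \<open>\<chi>\<close>-recurrent, with the same
  initial values (in the singular case because (B2) makes \<open>n\<close> odd when \<open>\<epsilon> = -1\<close>), hence
  \<open>cj(a\<^sub>s) = \<epsilon>\<^sup>s a\<^sub>s\<close> for all \<open>s\<close>. This identity is the hermitian symmetry of \<open>X\<close> and the
  skew-hermitian symmetry of \<open>X\<Phi>\<close>, which is \<open>X\<close> shifted by one. Finally, the initial values
  give every column of \<open>X\<close> a pivot, so \<open>X\<close> is nonsingular.\<close>

lemma sum_atLeast0LessThan_eq_single:
  fixes p n :: nat
  assumes "p < n" and "\<And>j. j < n \<Longrightarrow> j \<noteq> p \<Longrightarrow> f j = 0"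
  shows "(\<Sum>j\<in>{0..<n}. f j) = f p"
  using assms by (subst sum.mono_neutral_right[of "{0..<n}" "{p}"]) auto

lemma power_self_inverse:
  assumes "(e::'a::monoid_mult) * e = 1"
  shows "e ^ k = (if even k then 1 else e)"
  by (induction k) (use assms in auto)

lemma det_ne_zero_if_column_pivots:
  fixes A :: "'a::field mat"
  assumes A: "A \<in> carrier_mat n n"
    and pivot: "\<And>j. j < n \<Longrightarrow> \<exists>r<n. A $$ (r, j) \<noteq> 0 \<and> (\<forall>k<j. A $$ (r, k) = 0)"
  shows "det A \<noteq> 0"
proof
  assume "det A = 0"
  then obtain v where v: "v \<in> carrier_vec n" "v \<noteq> 0\<^sub>v n" "A *\<^sub>v v = 0\<^sub>v n"
    using det_0_iff_vec_prod_zero_field[OF A] by auto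
  have "v $ j = 0" if "j < n" for j
    using that
  proof (induction "n - j" arbitrary: j rule: less_induct)
    case less
    obtain r where r: "r < n" "A $$ (r, j) \<noteq> 0" "\<forall>k<j. A $$ (r, k) = 0"
      using pivot[OF less.prems] by blast
    have "0 = (A *\<^sub>v v) $ r" using v r by simp
    also have "\<dots> = (\<Sum>k\<in>{0..<n}. A $$ (r, k) * v $ k)"
      using A v(1) r by (simp add: scalar_prod_def)
    also have "\<dots> = A $$ (r, j) * v $ j"
      using less r by (intro sum_atLeast0LessThan_eq_single) (auto simp: nat_neq_iff)
    finally show ?case using r(2) by simp
  qed
  then show False using v by (auto intro!: eq_vecI)
qed

lemma neg_one_neq_one:
  assumes "(2::'a::ring_1) \<noteq> 0"
  shows "(-1::'a) \<noteq> 1"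
proof
  assume "(-1::'a) = 1"
  then have "(1::'a) + 1 = 0" by (simp only: neg_eq_iff_add_eq_0)
  then show False using assms by simp
qed

lemma is_involution_imp_comm_ring_hom:
  assumes "is_involution (cj :: 'a::field \<Rightarrow> 'a)"
  shows "comm_ring_hom cj"
proof -
  have add: "cj (a + b) = cj a + cj b" and mult: "cj (a * b) = cj a * cj b"
    and invol: "cj (cj a) = a" for a b
    using assms unfolding is_involution_def by auto
  have zero: "cj 0 = 0" using add[of 0 0] by (metis add.right_neutral add_left_cancel)
  have "cj 1 \<noteq> 0"
  proof
    assume "cj 1 = 0"
    then have "cj a = 0" for a using mult[of a 1] by simp
    then show False using invol[of 1] zero by simp
  qed
  moreover have "cj 1 = cj 1 * cj 1" using mult[of 1 1] by simp
  ultimately have "cj 1 = 1" by (metis mult_cancel_left1)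
  then show ?thesis by unfold_locales (auto simp: add mult zero)
qed

lemma coeff_char_poly_0:
  assumes "(A :: 'a::field mat) \<in> carrier_mat n n"
  shows "coeff (char_poly A) 0 = (-1) ^ n * det A"
proof -
  have "coeff (char_poly A) 0 = det (- char_matrix A 0)"
    by (simp add: char_poly_matrix[OF assms] poly_0_coeff_0[symmetric])
  also have "- char_matrix A 0 = (-1) \<cdot>\<^sub>m A"
    by (rule eq_matI) (use assms in \<open>auto simp: char_matrix_def\<close>)
  finally show ?thesis using assms by simp
qed

lemma char_poly_smult_self_inverse:
  assumes A: "(A :: 'a::comm_ring_1 mat) \<in> carrier_mat n n" and e: "e * e = 1"
  shows "char_poly (e \<cdot>\<^sub>m A) = Polynomial.smult (e ^ n) (pcompose (char_poly A) [:0, e:])"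
proof -
  have pc: "comm_ring_hom (\<lambda>q. pcompose q [:0, e:])"
    by unfold_locales (auto simp: pcompose_add pcompose_mult pcompose_1)
  have "char_poly_matrix (e \<cdot>\<^sub>m A) = [:e:] \<cdot>\<^sub>m map_mat (\<lambda>q. pcompose q [:0, e:]) (char_poly_matrix A)"
    by (rule eq_matI) (use A e in \<open>auto simp: char_poly_matrix_def pcompose_pCons smult_add_right\<close>)
  then have "char_poly (e \<cdot>\<^sub>m A) = [:e:] ^ n * pcompose (char_poly A) [:0, e:]"
    unfolding char_poly_def using A by (simp add: comm_ring_hom.hom_det[OF pc] char_poly_matrix_def)
  then show ?thesis by (simp add: poly_const_pow)
qed

lemma coeff_smult_pcompose_bar_poly:
  assumes "comm_ring_hom cj"
  shows "coeff (Polynomial.smult (e ^ n) (pcompose (bar_poly cj p) [:0, e:])) k = e ^ (n + k) * cj (coeff p k)"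
proof -
  interpret cj: comm_ring_hom cj by fact
  show ?thesis
    by (simp add: coeff_pcompose_linear bar_poly_def coeff_map_poly power_add mult.assoc)
qed

lemma irreducible_power_eq_monom:
  fixes p :: "'a::field poly"
  assumes irr: "irreducible p" and "degree (p ^ k) = n" and "coeff (p ^ k) n = 1"
    and "coeff (p ^ k) 0 = 0"
  shows "p ^ k = monom 1 n"
proof -
  have "k \<noteq> 0" using assms(4) by (cases k) auto
  then have "poly p 0 = 0" using assms(4) by (simp add: poly_0_coeff_0[symmetric] poly_power)
  then obtain u where pu: "p = [:0, 1:] * u" using poly_eq_0_iff_dvd[of p 0] by (auto elim: dvdE)
  have "\<not> [:0, 1::'a:] dvd 1" by (auto simp: is_unit_poly_iff)
  then have "u dvd 1" using irreducibleD[OF irr pu] by auto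
  then obtain u0 where u0: "u = [:u0:]" "u0 dvd 1" unfolding is_unit_poly_iff by blast
  then have "p = monom u0 1" using pu by (simp add: monom_altdef)
  then have "p ^ k = monom (u0 ^ k) k" by (simp add: monom_power)
  moreover have "u0 ^ k \<noteq> 0" using u0(2) by auto
  ultimately have "k = n" using assms(2) by (simp add: degree_monom_eq)
  then show ?thesis using \<open>p ^ k = monom (u0 ^ k) k\<close> assms(3) by simp
qed

subsection \<open>Companion matrices\<close>

text \<open>\<open>g i\<close> is the coefficient of \<open>x\<^sup>i\<close>; \<open>frobenius_mat n c\<close> is \<open>companion_mat n (\<lambda>i. c (n - i))\<close>.\<close>

definition companion_mat :: "nat \<Rightarrow> (nat \<Rightarrow> 'a::comm_ring_1) \<Rightarrow> 'a mat" where
  "companion_mat n g =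
     mat n n (\<lambda>(i, j). (if j = n - 1 then - g i else 0) + (if i = j + 1 then 1 else 0))"

lemma companion_mat_carrier [simp]: "companion_mat n g \<in> carrier_mat n n"
  and companion_mat_dim [simp]: "dim_row (companion_mat n g) = n" "dim_col (companion_mat n g) = n"
  by (simp_all add: companion_mat_def)

lemma companion_mat_cong:
  "(\<And>i. i < n \<Longrightarrow> g i = h i) \<Longrightarrow> companion_mat n g = companion_mat n h"
  by (rule eq_matI) (auto simp: companion_mat_def)

lemma char_poly_companion_mat:
  "char_poly (companion_mat n g) = monom 1 n + (\<Sum>i<n. monom (g i) i)"
proof (induction n arbitrary: g)
  case 0
  then show ?case by (simp add: char_poly_defs companion_mat_def det_def)
next
  case (Suc m)
  define M where "M = char_poly_matrix (companion_mat (Suc m) g)"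
  have M: "M \<in> carrier_mat (Suc m) (Suc m)" by (simp add: M_def)
  have row0: "M $$ (0, j) = (if j = 0 then [:0, 1:] else 0) + (if j = m then [:g 0:] else 0)"
    if "j < Suc m" for j
    using that by (auto simp: M_def char_poly_matrix_def companion_mat_def)
  have "mat_delete M 0 0 = char_poly_matrix (companion_mat m (\<lambda>i. g (Suc i)))"
    by (rule eq_matI) (auto simp: M_def mat_delete_def char_poly_matrix_def companion_mat_def)
  then have cof0: "cofactor M 0 0 = monom 1 m + (\<Sum>i<m. monom (g (Suc i)) i)"
    by (simp add: cofactor_def Suc[unfolded char_poly_def])
  have "upper_triangular (mat_delete M 0 m)"
    by (auto simp: upper_triangular_def M_def mat_delete_def char_poly_matrix_def companion_mat_def)
  then have "det (mat_delete M 0 m) = prod_list (diag_mat (mat_delete M 0 m))"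
    by (intro det_upper_triangular) (use M in \<open>auto simp: mat_delete_def\<close>)
  also have "diag_mat (mat_delete M 0 m) = replicate m (-1)"
    by (rule nth_equalityI)
      (auto simp: one_pCons diag_mat_def M_def mat_delete_def char_poly_matrix_def companion_mat_def)
  finally have cofm: "cofactor M 0 m = 1"
    by (simp add: cofactor_def flip: power_mult_distrib)
  have "det M = (\<Sum>j<Suc m. M $$ (0, j) * cofactor M 0 j)"
    by (rule laplace_expansion_row[OF M]) simp
  also have "\<dots> = (\<Sum>j<Suc m. (if j = 0 then [:0, 1:] * cofactor M 0 0 else 0)
      + (if j = m then [:g 0:] * cofactor M 0 m else 0))"
    by (rule sum.cong) (auto simp: row0 distrib_right)
  also have "\<dots> = [:0, 1:] * cofactor M 0 0 + [:g 0:] * cofactor M 0 m"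
    by (simp add: sum.distrib)
  also have "\<dots> = monom 1 (Suc m) + (\<Sum>i<Suc m. monom (g i) i)"
    by (simp add: cof0 cofm sum.lessThan_Suc_shift sum_distrib_left monom_Suc monom_0 algebra_simps
        del: sum.lessThan_Suc)
  finally show ?case by (simp add: char_poly_def M_def)
qed

lemma coeff_char_poly_companion_mat:
  "i < n \<Longrightarrow> coeff (char_poly (companion_mat n g)) i = g i"
  by (simp add: char_poly_companion_mat coeff_sum coeff_monom)

lemma frobenius_block_eq_companion_mat:
  assumes "frobenius_block n \<Phi>"
  shows "\<Phi> = companion_mat n (coeff (char_poly \<Phi>))"
proof -
  obtain c where \<Phi>: "\<Phi> = frobenius_mat n c" using assms unfolding frobenius_block_def by blast
  then have "\<Phi> = companion_mat n (\<lambda>i. c (n - i))"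
    by (intro eq_matI) (auto simp: frobenius_mat_def companion_mat_def)
  also have "\<dots> = companion_mat n (coeff (char_poly \<Phi>))"
    unfolding \<open>\<Phi> = companion_mat n (\<lambda>i. c (n - i))\<close>
    by (rule companion_mat_cong) (simp add: coeff_char_poly_companion_mat)
  finally show ?thesis .
qed

lemma frobenius_block_char_poly:
  assumes "frobenius_block n \<Phi>"
  shows "n \<ge> 1" and "\<Phi> \<in> carrier_mat n n"
    and "degree (char_poly \<Phi>) = n" and "coeff (char_poly \<Phi>) n = 1"
proof -
  show "n \<ge> 1" using assms by (simp add: frobenius_block_def)
  show \<Phi>: "\<Phi> \<in> carrier_mat n n"
    by (subst frobenius_block_eq_companion_mat[OF assms]) (rule companion_mat_carrier)
  show "degree (char_poly \<Phi>) = n" "coeff (char_poly \<Phi>) n = 1"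
    using degree_monic_char_poly[OF \<Phi>] by auto
qed

lemma mult_companion_mat_0_index:
  assumes "A \<in> carrier_mat n n" "i < n" "j < n"
  shows "(A * companion_mat n (\<lambda>_. 0)) $$ (i, j) = (if j + 1 < n then A $$ (i, j + 1) else 0)"
proof -
  have "(A * companion_mat n (\<lambda>_. 0)) $$ (i, j)
      = (\<Sum>k\<in>{0..<n}. A $$ (i, k) * (if k = j + 1 then 1 else 0))"
    using assms by (simp add: scalar_prod_def companion_mat_def)
  also have "\<dots> = (if j + 1 < n then A $$ (i, j + 1) else 0)"
    by (cases "j + 1 < n") (simp_all add: sum_atLeast0LessThan_eq_single[of "j + 1"])
  finally show ?thesis .
qed

subsection \<open>Sesquilinear symmetries\<close>

lemma star_mat_eq_transpose_map: "star_mat cj M = transpose_mat (map_mat cj M)"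
  by (rule eq_matI) (auto simp: star_mat_def)

lemma star_mat_id: "star_mat (\<lambda>x. x) M = transpose_mat M"
  by (rule eq_matI) (auto simp: star_mat_def)

lemma star_mat_mult:
  assumes "comm_ring_hom cj" "A \<in> carrier_mat n n" "B \<in> carrier_mat n n"
  shows "star_mat cj (A * B) = star_mat cj B * star_mat cj A"
proof -
  interpret cj: comm_ring_hom cj by fact
  show ?thesis using assms(2,3) by (simp add: star_mat_eq_transpose_map cj.mat_hom_mult transpose_mult)
qed

lemma char_poly_star_mat:
  assumes "comm_ring_hom cj" "A \<in> carrier_mat n n"
  shows "char_poly (star_mat cj A) = bar_poly cj (char_poly A)"
  using assms by (simp add: star_mat_eq_transpose_map comm_ring_hom.char_poly_hom bar_poly_def)

lemma char_poly_of_star_congruence: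
  fixes X \<Phi> :: "'a::field mat"
  assumes hom: "comm_ring_hom cj" and e: "\<epsilon> * \<epsilon> = 1"
    and \<Phi>: "\<Phi> \<in> carrier_mat n n" and X: "X \<in> carrier_mat n n" "det X \<noteq> 0"
    and herm: "X = star_mat cj X" and skew: "X * \<Phi> = \<epsilon> \<cdot>\<^sub>m star_mat cj (X * \<Phi>)"
  shows "char_poly \<Phi> = Polynomial.smult (\<epsilon> ^ n) (pcompose (bar_poly cj (char_poly \<Phi>)) [:0, \<epsilon>:])"
proof -
  define S where "S = star_mat cj \<Phi>"
  have S: "S \<in> carrier_mat n n" using \<Phi> by (simp add: S_def star_mat_def)
  obtain Q where Q: "Q \<in> carrier_mat n n" "Q * X = 1\<^sub>m n" "X * Q = 1\<^sub>m n"
    using det_non_zero_imp_unit[OF X] unfolding Units_def ring_mat_def by auto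
  have X\<Phi>: "X * \<Phi> = \<epsilon> \<cdot>\<^sub>m S * X"
    using skew S X(1) unfolding star_mat_mult[OF hom X(1) \<Phi>] herm[symmetric] S_def[symmetric]
    by (simp add: mult_smult_assoc_mat)
  have "\<epsilon> \<cdot>\<^sub>m S = \<epsilon> \<cdot>\<^sub>m S * (X * Q)" using S by (simp add: Q(3))
  also have "\<dots> = \<epsilon> \<cdot>\<^sub>m S * X * Q" using S X(1) Q(1) by (intro assoc_mult_mat[symmetric]) auto
  finally have "\<epsilon> \<cdot>\<^sub>m S = X * \<Phi> * Q" by (simp only: X\<Phi>)
  then have "similar_mat (\<epsilon> \<cdot>\<^sub>m S) \<Phi>"
    using Q S X(1) \<Phi> by (intro similar_matI[of "\<epsilon> \<cdot>\<^sub>m S" \<Phi> X Q n]) auto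
  then have "char_poly \<Phi> = char_poly (\<epsilon> \<cdot>\<^sub>m S)" by (simp add: char_poly_similar)
  also have "\<dots> = Polynomial.smult (\<epsilon> ^ n) (pcompose (char_poly S) [:0, \<epsilon>:])"
    by (rule char_poly_smult_self_inverse[OF S e])
  finally show ?thesis using char_poly_star_mat[OF hom \<Phi>] by (simp add: S_def)
qed

text \<open>\<open>XS\<close> is \<open>X\<close> shifted left by one column, so the two symmetries make each step down an
  antidiagonal of \<open>X\<close> flip the sign. The longest antidiagonal has an odd number \<open>n - 1\<close> of steps,
  so its corner entry equals its own negative; the other entries of the last row are, up to sign,
  entries of the zero last column of \<open>XS\<close>.\<close>

lemma det_symmetric_skew_shift_eq_0:
  fixes X :: "'a::field mat"
  assumes two: "(2::'a) \<noteq> 0" and X: "X \<in> carrier_mat n n" and "even n" "n > 0"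
    and sym: "transpose_mat X = X"
    and skew: "X * companion_mat n (\<lambda>_. 0) = (-1) \<cdot>\<^sub>m transpose_mat (X * companion_mat n (\<lambda>_. 0))"
  shows "det X = 0"
proof -
  let ?Y = "X * companion_mat n (\<lambda>_. 0)"
  have Y: "?Y $$ (i, j) = (if j + 1 < n then X $$ (i, j + 1) else 0)" if "i < n" "j < n" for i j
    using mult_companion_mat_0_index[OF X that] .
  have Y_skew: "?Y $$ (i, j) = - ?Y $$ (j, i)" if "i < n" "j < n" for i j
    using that X by (subst skew) (simp del: index_mult_mat(1))
  have X_sym: "X $$ (i, j) = X $$ (j, i)" if "i < n" "j < n" for i j
    using that X by (subst sym[symmetric]) simp
  have flip: "X $$ (i + 1, j) = - X $$ (i, j + 1)" if "i + 1 < n" "j + 1 < n" for i j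
    using Y_skew[of i j] Y[of i j] Y[of j i] X_sym[of j "i + 1"] that by simp
  have antidiag: "X $$ (n - 1 - t, t) = (-1) ^ t * X $$ (n - 1, 0)" if "t \<le> n - 1" for t
    using that
  proof (induction t)
    case (Suc t)
    then show ?case using flip[of "n - 1 - Suc t" t] by (simp add: Suc_diff_Suc)
  qed simp
  have "X $$ (n - 1, 0) = - X $$ (n - 1, 0)"
    using antidiag[of "n - 1"] X_sym[of 0 "n - 1"] \<open>even n\<close> \<open>n > 0\<close> by simp
  then have "2 * X $$ (n - 1, 0) = 0" by (simp only: mult_2 eq_neg_iff_add_eq_0)
  then have corner: "X $$ (n - 1, 0) = 0" using two by simp
  have last_row: "X $$ (n - 1, j) = 0" if "j < n" for j
  proof (cases j)
    case (Suc k)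
    then show ?thesis using Y[of "n - 1" k] Y_skew[of "n - 1" k] Y[of k "n - 1"] that by simp
  qed (use corner in simp)
  have "X *\<^sub>v unit_vec n (n - 1) = 0\<^sub>v n"
  proof (rule eq_vecI)
    fix i assume "i < dim_vec (0\<^sub>v n :: 'a vec)"
    then show "(X *\<^sub>v unit_vec n (n - 1)) $ i = 0\<^sub>v n $ i"
      using X \<open>n > 0\<close> X_sym[of i "n - 1"] last_row[of i]
      by (simp add: scalar_prod_def sum_atLeast0LessThan_eq_single[of "n - 1"])
  qed (use X in simp)
  then show ?thesis
    using \<open>n > 0\<close> X by (subst det_0_iff_vec_prod_zero_field[OF X]) (auto intro!: exI[of _ "unit_vec n (n - 1)"])
qed

lemma char_poly_companion_not_even_monom:
  fixes X :: "'a::field mat"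
  assumes two: "(2::'a) \<noteq> 0" and X: "X \<in> carrier_mat n n" "det X \<noteq> 0"
    and sym: "transpose_mat X = X"
    and skew: "X * companion_mat n g = (-1) \<cdot>\<^sub>m transpose_mat (X * companion_mat n g)"
  shows "char_poly (companion_mat n g) \<notin> {monom 1 (2 * k) | k. k \<ge> 1}"
proof
  assume "char_poly (companion_mat n g) \<in> {monom 1 (2 * k) | k. k \<ge> 1}"
  then obtain k where k: "char_poly (companion_mat n g) = monom 1 (2 * k)" "k \<ge> 1" by auto
  have "n = 2 * k" using k degree_monic_char_poly[of "companion_mat n g" n] by (simp add: degree_monom_eq)
  have shift: "companion_mat n g = companion_mat n (\<lambda>_. 0)"
  proof (rule companion_mat_cong)
    fix i assume "i < n"
    then show "g i = 0"
      using k(1) coeff_char_poly_companion_mat[of i n g] \<open>n = 2 * k\<close> by (simp add: coeff_monom)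
  qed
  have "even n" "n > 0" using \<open>n = 2 * k\<close> k(2) by auto
  from det_symmetric_skew_shift_eq_0[OF two X(1) this sym skew[unfolded shift]] show False
    using X(2) by simp
qed

subsection \<open>Monic linear recurrences\<close>

lemma recurrent_iff_sum:
  assumes "degree f = n"
  shows "recurrent f a q r \<longleftrightarrow> (\<forall>l. q \<le> l \<and> l + n \<le> r \<longrightarrow> (\<Sum>k\<le>n. coeff f k * a (l + k)) = 0)"
proof -
  have "(\<Sum>i = 0..n. coeff f (n - i) * a (l + n - i)) = (\<Sum>k\<le>n. coeff f k * a (l + k))" for l
    by (subst sum.atLeastAtMost_rev[of _ 0 n, simplified]) (auto simp: atLeast0AtMost intro!: sum.cong)
  then show ?thesis unfolding recurrent_def assms by simp
qed

lemma monic_recurrence_step: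
  fixes g a :: "nat \<Rightarrow> 'a::comm_ring_1"
  assumes "g n = 1"
  shows "(\<Sum>k\<le>n. g k * a (l + k)) = 0 \<longleftrightarrow> a (l + n) = - (\<Sum>k<n. g k * a (l + k))"
proof -
  have "(\<Sum>k\<le>n. g k * a (l + k)) = a (l + n) + (\<Sum>k<n. g k * a (l + k))"
    unfolding lessThan_Suc_atMost[symmetric] using assms by simp
  then show ?thesis by (simp add: eq_neg_iff_add_eq_0)
qed

lemma monic_recurrence_unique:
  fixes g u v :: "nat \<Rightarrow> 'a::comm_ring_1"
  assumes gn: "g n = 1"
    and init: "\<And>s. 2 \<le> s \<Longrightarrow> s \<le> n + 1 \<Longrightarrow> u s = v s"
    and ru: "\<And>l. 2 \<le> l \<Longrightarrow> l \<le> N \<Longrightarrow> (\<Sum>k\<le>n. g k * u (l + k)) = 0"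
    and rv: "\<And>l. 2 \<le> l \<Longrightarrow> l \<le> N \<Longrightarrow> (\<Sum>k\<le>n. g k * v (l + k)) = 0"
  shows "2 \<le> s \<Longrightarrow> s \<le> N + n \<Longrightarrow> u s = v s"
proof (induction s rule: less_induct)
  case (less s)
  show ?case
  proof (cases "s \<le> n + 1")
    case False
    define l where "l = s - n"
    have l: "2 \<le> l" "l \<le> N" "s = l + n" using False less.prems by (auto simp: l_def)
    have "(\<Sum>k<n. g k * u (l + k)) = (\<Sum>k<n. g k * v (l + k))"
      using l by (intro sum.cong refl arg_cong[where f = "(*) _"] less.IH) auto
    then show ?thesis
      using ru[OF l(1,2)] rv[OF l(1,2)] l(3) by (simp add: monic_recurrence_step[of g n, OF gn])
  qed (use init less.prems in auto)
qed

text \<open>For monic \<open>g\<close> of degree \<open>n\<close>: the \<open>g\<close>-recurrent sequence with initial values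
  \<open>f 2, \<dots>, f (n + 1)\<close>.\<close>

function recurrent_seq :: "nat \<Rightarrow> (nat \<Rightarrow> 'a::comm_ring_1) \<Rightarrow> (nat \<Rightarrow> 'a) \<Rightarrow> nat \<Rightarrow> 'a" where
  "recurrent_seq n g f s =
     (if s \<le> n + 1 then f s else - (\<Sum>k<n. g k * recurrent_seq n g f (s - n + k)))"
  by pat_completeness auto
termination by (relation "measure (\<lambda>(n, g, f, s). s)") auto

declare recurrent_seq.simps [simp del]

lemma recurrent_seq_init: "s \<le> n + 1 \<Longrightarrow> recurrent_seq n g f s = f s"
  by (subst recurrent_seq.simps) simp

lemma recurrent_seq_recurrence:
  assumes "g n = 1" "2 \<le> l"
  shows "(\<Sum>k\<le>n. g k * recurrent_seq n g f (l + k)) = 0"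
  using assms by (subst monic_recurrence_step) (auto simp: recurrent_seq.simps[of n g f "l + n"])

lemma recurrent_seq_eq:
  assumes gn: "g n = 1" and init: "\<And>s. 2 \<le> s \<Longrightarrow> s \<le> n + 1 \<Longrightarrow> a s = f s"
    and rec: "\<And>l. 2 \<le> l \<Longrightarrow> l \<le> N \<Longrightarrow> (\<Sum>k\<le>n. g k * a (l + k)) = 0"
    and s: "2 \<le> s" "s \<le> N + n"
  shows "a s = recurrent_seq n g f s"
proof (rule monic_recurrence_unique[of g n a "recurrent_seq n g f" N, OF gn _ rec _ s])
  show "a s = recurrent_seq n g f s" if "2 \<le> s" "s \<le> n + 1" for s
    using init[OF that] that(2) by (simp add: recurrent_seq_init)
  show "(\<Sum>k\<le>n. g k * recurrent_seq n g f (l + k)) = 0" if "2 \<le> l" for l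
    using recurrent_seq_recurrence[of g n, OF gn that] .
qed

lemma recurrent_recurrent_seq:
  assumes "degree f = n" "coeff f n = 1" "2 \<le> q"
  shows "recurrent f (recurrent_seq n (coeff f) a) q r"
  using assms recurrent_seq_recurrence[of "coeff f" n] by (simp add: recurrent_iff_sum)

text \<open>Under (B1) the sequence \<open>\<epsilon>\<^sup>s cj (b s)\<close> is recurrent whenever \<open>b\<close> is, hence equals \<open>b\<close>
  as soon as the initial values agree.\<close>

lemma recurrent_seq_conj_symmetric:
  fixes cj :: "'a::field \<Rightarrow> 'a" and g b :: "nat \<Rightarrow> 'a"
  assumes hom: "comm_ring_hom cj" and e: "\<epsilon> * \<epsilon> = 1" and gn: "g n = 1"
    and B1: "\<And>k. g k = \<epsilon> ^ (n + k) * cj (g k)"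
    and rec: "\<And>l. 2 \<le> l \<Longrightarrow> (\<Sum>k\<le>n. g k * b (l + k)) = 0"
    and init: "\<And>s. 2 \<le> s \<Longrightarrow> s \<le> n + 1 \<Longrightarrow> cj (b s) = \<epsilon> ^ s * b s"
    and s: "2 \<le> s"
  shows "cj (b s) = \<epsilon> ^ s * b s"
proof -
  interpret cj: comm_ring_hom cj by fact
  have sq: "\<epsilon> ^ k * \<epsilon> ^ k = 1" for k by (simp add: power_self_inverse[OF e] e)
  define d where "d s = \<epsilon> ^ s * cj (b s)" for s
  have d_rec: "(\<Sum>k\<le>n. g k * d (l + k)) = 0" if "2 \<le> l" for l
  proof -
    have "g k * d (l + k) = \<epsilon> ^ (n + l) * cj (g k * b (l + k))" for k
    proof -
      have "g k * d (l + k) = (\<epsilon> ^ k * \<epsilon> ^ k) * \<epsilon> ^ (n + l) * cj (g k * b (l + k))"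
        by (subst B1) (simp add: d_def power_add algebra_simps cj.hom_mult)
      then show ?thesis by (simp only: sq mult_1_left)
    qed
    then have "(\<Sum>k\<le>n. g k * d (l + k)) = \<epsilon> ^ (n + l) * cj (\<Sum>k\<le>n. g k * b (l + k))"
      by (simp add: cj.hom_sum sum_distrib_left)
    then show ?thesis using rec[OF that] by simp
  qed
  have d_init: "d s = b s" if "2 \<le> s" "s \<le> n + 1" for s
    using init[OF that] sq[of s] by (simp add: d_def mult.assoc[symmetric])
  have "d s = b s"
    using d_rec rec s by (intro monic_recurrence_unique[of g n d b s, OF gn d_init]) auto
  then have "\<epsilon> ^ s * (\<epsilon> ^ s * cj (b s)) = \<epsilon> ^ s * b s" by (simp add: d_def)
  then show ?thesis by (simp add: mult.assoc[symmetric] sq cj.hom_mult)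
qed

subsection \<open>The signed Hankel matrix\<close>

text \<open>The paper's \<open>X = [\<epsilon>\<^sup>i a\<^sub>i\<^sub>+\<^sub>j]\<^sub>i\<^sub>,\<^sub>j\<^sub>=\<^sub>1\<^sup>n\<close> with 0-based indices.\<close>

definition signed_hankel_mat :: "nat \<Rightarrow> 'a::comm_ring_1 \<Rightarrow> (nat \<Rightarrow> 'a) \<Rightarrow> 'a mat" where
  "signed_hankel_mat n \<epsilon> a = mat n n (\<lambda>(i, j). \<epsilon> ^ (i + 1) * a (i + j + 2))"

lemma signed_hankel_mat_carrier [simp]: "signed_hankel_mat n \<epsilon> a \<in> carrier_mat n n"
  and signed_hankel_mat_dim [simp]:
    "dim_row (signed_hankel_mat n \<epsilon> a) = n" "dim_col (signed_hankel_mat n \<epsilon> a) = n"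
  by (simp_all add: signed_hankel_mat_def)

lemma signed_hankel_mat_cong:
  "(\<And>s. s \<le> 2 * n \<Longrightarrow> a s = b s) \<Longrightarrow> signed_hankel_mat n \<epsilon> a = signed_hankel_mat n \<epsilon> b"
  by (rule eq_matI) (auto simp: signed_hankel_mat_def)

lemma signed_hankel_mat_eq_recurrent_seq:
  assumes gn: "g n = 1" and rec: "\<And>l. 2 \<le> l \<Longrightarrow> l \<le> n \<Longrightarrow> (\<Sum>k\<le>n. g k * a (l + k)) = 0"
  shows "signed_hankel_mat n \<epsilon> a = signed_hankel_mat n \<epsilon> (recurrent_seq n g a)"
proof (rule signed_hankel_mat_cong)
  fix s assume "s \<le> 2 * n"
  then show "a s = recurrent_seq n g a s"
    using rec by (cases "s < 2") (auto simp: recurrent_seq_init intro!: recurrent_seq_eq[of g n a a n, OF gn])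
qed

text \<open>Multiplying by the companion matrix shifts the Hankel sequence by one; in the last column
  this is the recurrence.\<close>

lemma signed_hankel_mult_companion_index:
  assumes gn: "g n = 1" and rec: "\<And>l. 2 \<le> l \<Longrightarrow> (\<Sum>k\<le>n. g k * b (l + k)) = 0"
    and ij: "i < n" "j < n"
  shows "(signed_hankel_mat n \<epsilon> b * companion_mat n g) $$ (i, j) = \<epsilon> ^ (i + 1) * b (i + j + 3)"
proof -
  have "(signed_hankel_mat n \<epsilon> b * companion_mat n g) $$ (i, j)
      = (\<Sum>k\<in>{0..<n}. \<epsilon> ^ (i + 1) * b (i + k + 2)
           * ((if j = n - 1 then - g k else 0) + (if k = j + 1 then 1 else 0)))"
    using ij by (simp add: scalar_prod_def signed_hankel_mat_def companion_mat_def)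
  also have "\<dots> = \<epsilon> ^ (i + 1) * b (i + j + 3)"
  proof (cases "j = n - 1")
    case True
    then have "(\<Sum>k\<in>{0..<n}. \<epsilon> ^ (i + 1) * b (i + k + 2)
           * ((if j = n - 1 then - g k else 0) + (if k = j + 1 then 1 else 0)))
      = \<epsilon> ^ (i + 1) * (\<Sum>k<n. - (g k * b (i + 2 + k)))"
      using ij by (auto simp: atLeast0LessThan sum_distrib_left algebra_simps intro!: sum.cong)
    also have "(\<Sum>k<n. - (g k * b (i + 2 + k))) = b (i + 2 + n)"
      using rec[of "i + 2"] monic_recurrence_step[of g n b "i + 2", OF gn] by (simp add: sum_negf)
    finally show ?thesis
      using True ij by (simp add: ac_simps)
  next
    case False
    then show ?thesis
      using ij by (subst sum_atLeast0LessThan_eq_single[of "j + 1"]) (auto simp: eval_nat_numeral)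
  qed
  finally show ?thesis .
qed

context
  fixes cj :: "'a::field \<Rightarrow> 'a" and \<epsilon> :: 'a and b :: "nat \<Rightarrow> 'a"
  assumes hom: "comm_ring_hom cj" and e: "\<epsilon> * \<epsilon> = 1" "cj \<epsilon> = \<epsilon>"
    and sym: "\<And>s. 2 \<le> s \<Longrightarrow> cj (b s) = \<epsilon> ^ s * b s"
begin

interpretation cj: comm_ring_hom cj by (rule hom)

lemma conj_signed_power: "cj (\<epsilon> ^ k * b s) = \<epsilon> ^ (k + s) * b s" if "2 \<le> s"
  using that e by (simp add: cj.hom_mult cj.hom_power sym power_add mult.assoc)

lemma signed_hankel_mat_hermitian: "star_mat cj (signed_hankel_mat n \<epsilon> b) = signed_hankel_mat n \<epsilon> b"
proof (rule eq_matI)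
  fix i j assume "i < dim_row (signed_hankel_mat n \<epsilon> b)" "j < dim_col (signed_hankel_mat n \<epsilon> b)"
  then have ij: "i < n" "j < n" by auto
  then have "star_mat cj (signed_hankel_mat n \<epsilon> b) $$ (i, j) = cj (\<epsilon> ^ (j + 1) * b (j + i + 2))"
    by (simp add: star_mat_def signed_hankel_mat_def)
  also have "\<dots> = \<epsilon> ^ (j + 1 + (j + i + 2)) * b (j + i + 2)" by (rule conj_signed_power) simp
  also have "\<epsilon> ^ (j + 1 + (j + i + 2)) = \<epsilon> ^ (i + 1)"
    using e by (simp add: power_self_inverse)
  finally show "star_mat cj (signed_hankel_mat n \<epsilon> b) $$ (i, j) = signed_hankel_mat n \<epsilon> b $$ (i, j)"
    using ij by (simp add: signed_hankel_mat_def add.commute)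
qed (auto simp: star_mat_def)

lemma signed_hankel_mult_companion_skew:
  assumes gn: "g n = 1" and rec: "\<And>l. 2 \<le> l \<Longrightarrow> (\<Sum>k\<le>n. g k * b (l + k)) = 0"
  defines "Y \<equiv> signed_hankel_mat n \<epsilon> b * companion_mat n g"
  shows "Y = \<epsilon> \<cdot>\<^sub>m star_mat cj Y"
proof (rule eq_matI)
  fix i j assume "i < dim_row (\<epsilon> \<cdot>\<^sub>m star_mat cj Y)" "j < dim_col (\<epsilon> \<cdot>\<^sub>m star_mat cj Y)"
  then have ij: "i < n" "j < n" by (auto simp: Y_def star_mat_def)
  then have "(\<epsilon> \<cdot>\<^sub>m star_mat cj Y) $$ (i, j) = \<epsilon> * cj (Y $$ (j, i))"
    by (simp add: Y_def star_mat_def del: index_mult_mat(1))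
  also have "Y $$ (j, i) = \<epsilon> ^ (j + 1) * b (j + i + 3)"
    unfolding Y_def by (rule signed_hankel_mult_companion_index[OF gn rec ij(2,1)])
  also have "cj (\<epsilon> ^ (j + 1) * b (j + i + 3)) = \<epsilon> ^ (j + 1 + (j + i + 3)) * b (j + i + 3)"
    by (rule conj_signed_power) simp
  also have "\<epsilon> * (\<epsilon> ^ (j + 1 + (j + i + 3)) * b (j + i + 3)) = \<epsilon> ^ (i + 1) * b (j + i + 3)"
    using e by (simp add: power_self_inverse)
  finally have "(\<epsilon> \<cdot>\<^sub>m star_mat cj Y) $$ (i, j) = \<epsilon> ^ (i + 1) * b (j + i + 3)" .
  moreover have "Y $$ (i, j) = \<epsilon> ^ (i + 1) * b (j + i + 3)"
    using signed_hankel_mult_companion_index[OF gn rec ij] unfolding Y_def by (simp only: add.commute[of j i])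
  ultimately show "Y $$ (i, j) = (\<epsilon> \<cdot>\<^sub>m star_mat cj Y) $$ (i, j)" by simp
qed (auto simp: Y_def star_mat_def)

end

text \<open>The pivots for the two normalisations of the initial values lie on the first row and the
  antidiagonal below it, resp. on the antidiagonal.\<close>

lemma det_signed_hankel_mat_first_ne_zero:
  fixes b g :: "nat \<Rightarrow> 'a::field"
  assumes e: "\<epsilon> \<noteq> 0" and n: "n \<ge> 1" and gn: "g n = 1" and g0: "g 0 \<noteq> 0"
    and rec: "(\<Sum>k\<le>n. g k * b (2 + k)) = 0"
    and init: "\<And>s. 2 \<le> s \<Longrightarrow> s \<le> n + 1 \<Longrightarrow> b s = (if s = 2 then 1 else 0)"
  shows "det (signed_hankel_mat n \<epsilon> b) \<noteq> 0"
proof (rule det_ne_zero_if_column_pivots[OF signed_hankel_mat_carrier])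
  have "(\<Sum>k<n. g k * b (2 + k)) = g 0"
    using n unfolding atLeast0LessThan[symmetric]
    by (subst sum_atLeast0LessThan_eq_single[of 0]) (auto simp: init)
  then have bn: "b (n + 2) \<noteq> 0"
    using rec monic_recurrence_step[of g n b 2, OF gn] g0 by simp
  fix j assume j: "j < n"
  show "\<exists>r<n. signed_hankel_mat n \<epsilon> b $$ (r, j) \<noteq> 0 \<and> (\<forall>k<j. signed_hankel_mat n \<epsilon> b $$ (r, k) = 0)"
  proof (cases j)
    case 0
    then show ?thesis using j e init[of 2] by (intro exI[of _ 0]) (simp add: signed_hankel_mat_def numeral_2_eq_2)
  next
    case (Suc j')
    then show ?thesis
      using j e bn by (intro exI[of _ "n - j"]) (auto simp: signed_hankel_mat_def init)
  qed
qed

lemma det_signed_hankel_mat_last_ne_zero: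
  fixes b :: "nat \<Rightarrow> 'a::field"
  assumes e: "\<epsilon> \<noteq> 0"
    and init: "\<And>s. 2 \<le> s \<Longrightarrow> s \<le> n + 1 \<Longrightarrow> b s = (if s = n + 1 then 1 else 0)"
  shows "det (signed_hankel_mat n \<epsilon> b) \<noteq> 0"
proof (rule det_ne_zero_if_column_pivots[OF signed_hankel_mat_carrier])
  fix j assume j: "j < n"
  then show "\<exists>r<n. signed_hankel_mat n \<epsilon> b $$ (r, j) \<noteq> 0 \<and> (\<forall>k<j. signed_hankel_mat n \<epsilon> b $$ (r, k) = 0)"
    using e by (intro exI[of _ "n - 1 - j"]) (auto simp: signed_hankel_mat_def init)
qed

lemma signed_hankel_mat_solution:
  fixes cj :: "'a::field \<Rightarrow> 'a" and \<chi> :: "'a poly"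
  assumes hom: "comm_ring_hom cj" and e: "\<epsilon> * \<epsilon> = 1" "cj \<epsilon> = \<epsilon>"
    and n: "n \<ge> 1" and deg: "degree \<chi> = n" and monic: "coeff \<chi> n = 1"
    and B1: "\<chi> = Polynomial.smult (\<epsilon> ^ n) (pcompose (bar_poly cj \<chi>) [:0, \<epsilon>:])"
    and rec: "recurrent \<chi> a 2 (2 * n)"
    and init: "(coeff \<chi> 0 \<noteq> 0 \<and> (\<forall>s\<in>{2..n+1}. a s = (if s = 2 then 1 else 0)))
             \<or> (\<epsilon> ^ (n + 1) = 1 \<and> (\<forall>s\<in>{2..n+1}. a s = (if s = n + 1 then 1 else 0)))"
  defines "X \<equiv> signed_hankel_mat n \<epsilon> a" and "\<Phi> \<equiv> companion_mat n (coeff \<chi>)"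
  shows "det X \<noteq> 0 \<and> X = star_mat cj X \<and> X * \<Phi> = \<epsilon> \<cdot>\<^sub>m star_mat cj (X * \<Phi>)"
proof -
  interpret cj: comm_ring_hom cj by fact
  define b where "b = recurrent_seq n (coeff \<chi>) a"
  have b_rec: "(\<Sum>k\<le>n. coeff \<chi> k * b (l + k)) = 0" if "2 \<le> l" for l
    using recurrent_seq_recurrence[of "coeff \<chi>" n, OF monic that] by (simp add: b_def)
  have b_init: "b s = a s" if "s \<le> n + 1" for s using that by (simp add: b_def recurrent_seq_init)
  have X_eq: "X = signed_hankel_mat n \<epsilon> b"
    unfolding X_def b_def using rec
    by (intro signed_hankel_mat_eq_recurrent_seq[of "coeff \<chi>", OF monic]) (simp add: recurrent_iff_sum[OF deg])
  have b_sym: "cj (b s) = \<epsilon> ^ s * b s" if "2 \<le> s" for s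
  proof (rule recurrent_seq_conj_symmetric[OF hom e(1) monic _ b_rec _ that])
    show "coeff \<chi> k = \<epsilon> ^ (n + k) * cj (coeff \<chi> k)" for k
      by (subst (1) B1) (rule coeff_smult_pcompose_bar_poly[OF hom])
    show "cj (b s) = \<epsilon> ^ s * b s" if "2 \<le> s" "s \<le> n + 1" for s
      using init that e(1) by (auto simp: b_init power2_eq_square)
  qed
  have "det (signed_hankel_mat n \<epsilon> b) \<noteq> 0"
    using init
  proof
    assume "coeff \<chi> 0 \<noteq> 0 \<and> (\<forall>s\<in>{2..n+1}. a s = (if s = 2 then 1 else 0))"
    then show ?thesis
      using e b_rec[of 2] by (intro det_signed_hankel_mat_first_ne_zero[of _ n "coeff \<chi>", OF _ n monic]) (auto simp: b_init)
  next
    assume "\<epsilon> ^ (n + 1) = 1 \<and> (\<forall>s\<in>{2..n+1}. a s = (if s = n + 1 then 1 else 0))"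
    then show ?thesis
      using e by (intro det_signed_hankel_mat_last_ne_zero) (auto simp: b_init)
  qed
  then show ?thesis
    unfolding \<Phi>_def X_eq
    by (intro conjI signed_hankel_mat_hermitian[OF hom e b_sym, symmetric]
        signed_hankel_mult_companion_skew[OF hom e b_sym monic b_rec])
qed

lemma singular_frobenius_block_sign:
  fixes \<chi> :: "'a::field poly" and \<epsilon> :: 'a
  assumes "irreducible p" "\<chi> = p ^ k" "degree \<chi> = n" "coeff \<chi> n = 1" "coeff \<chi> 0 = 0" "n \<ge> 1"
    and eps: "\<epsilon> = 1 \<or> \<epsilon> = -1"
    and B2: "\<epsilon> = -1 \<longrightarrow> \<chi> \<notin> {monom 1 (2 * k) | k. k \<ge> 1}"
  shows "\<epsilon> ^ (n + 1) = 1"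
proof (cases "\<epsilon> = 1")
  case False
  have "\<chi> = monom 1 n" using irreducible_power_eq_monom assms(1-5) by blast
  moreover have "\<epsilon> = -1" using False eps by simp
  ultimately have "odd n" using B2 \<open>n \<ge> 1\<close> by (auto elim!: evenE)
  then show ?thesis using \<open>\<epsilon> = -1\<close> by simp
qed simp

lemma frobenius_block_star_congruence_conditions:
  fixes X \<Phi> :: "'a::field mat"
  assumes hom: "comm_ring_hom cj" and two: "(2::'a) \<noteq> 0" and e: "\<epsilon> * \<epsilon> = 1"
    and cj_id: "\<epsilon> = -1 \<Longrightarrow> cj = (\<lambda>x. x)"
    and frob: "frobenius_block n \<Phi>" and X: "X \<in> carrier_mat n n" "det X \<noteq> 0"
    and herm: "X = star_mat cj X" and skew: "X * \<Phi> = \<epsilon> \<cdot>\<^sub>m star_mat cj (X * \<Phi>)"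
  shows "char_poly \<Phi> = Polynomial.smult (\<epsilon> ^ n) (pcompose (bar_poly cj (char_poly \<Phi>)) [:0, \<epsilon>:])
    \<and> (\<epsilon> = -1 \<longrightarrow> char_poly \<Phi> \<notin> {monom 1 (2 * k) | k. k \<ge> 1})"
proof (intro conjI impI)
  show "char_poly \<Phi> = Polynomial.smult (\<epsilon> ^ n) (pcompose (bar_poly cj (char_poly \<Phi>)) [:0, \<epsilon>:])"
    by (rule char_poly_of_star_congruence[OF hom e frobenius_block_char_poly(2)[OF frob] X herm skew])
  assume "\<epsilon> = -1"
  then have transpose: "star_mat cj = transpose_mat"
    unfolding cj_id[OF \<open>\<epsilon> = -1\<close>] by (simp add: fun_eq_iff star_mat_id)
  have "transpose_mat X = X" using herm unfolding transpose by (rule sym)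
  moreover have "X * \<Phi> = (-1) \<cdot>\<^sub>m transpose_mat (X * \<Phi>)"
    using skew unfolding transpose \<open>\<epsilon> = -1\<close> .
  ultimately show "char_poly \<Phi> \<notin> {monom 1 (2 * k) | k. k \<ge> 1}"
    using char_poly_companion_not_even_monom[OF two X, of "coeff (char_poly \<Phi>)"]
    unfolding frobenius_block_eq_companion_mat[OF frob, symmetric] by blast
qed

lemma frobenius_block_signed_hankel_solution:
  fixes cj :: "'a::field \<Rightarrow> 'a" and \<Phi> :: "'a mat"
  assumes hom: "comm_ring_hom cj" and eps: "\<epsilon> = 1 \<or> \<epsilon> = -1" and frob: "frobenius_block n \<Phi>"
    and B1: "char_poly \<Phi> = Polynomial.smult (\<epsilon> ^ n) (pcompose (bar_poly cj (char_poly \<Phi>)) [:0, \<epsilon>:])"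
    and B2: "\<epsilon> = -1 \<longrightarrow> char_poly \<Phi> \<notin> {monom 1 (2 * k) | k. k \<ge> 1}"
    and rec: "recurrent (char_poly \<Phi>) a 2 (2 * n)"
    and init: "\<forall>i \<in> {2..n+1}. a i = (if det \<Phi> \<noteq> 0 then (if i = 2 then 1 else 0)
                                           else (if i = n + 1 then 1 else 0))"
  defines "X \<equiv> signed_hankel_mat n \<epsilon> a"
  shows "det X \<noteq> 0 \<and> X = star_mat cj X \<and> X * \<Phi> = \<epsilon> \<cdot>\<^sub>m star_mat cj (X * \<Phi>)"
proof -
  interpret cj: comm_ring_hom cj by fact
  have e: "\<epsilon> * \<epsilon> = 1" "cj \<epsilon> = \<epsilon>" using eps by (auto simp: cj.hom_uminus)
  note \<Phi> = frobenius_block_char_poly[OF frob]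
  obtain p k where irr: "irreducible p" and pk: "char_poly \<Phi> = p ^ k"
    using frob unfolding frobenius_block_def by blast
  have "det \<Phi> \<noteq> 0 \<longleftrightarrow> coeff (char_poly \<Phi>) 0 \<noteq> 0"
    using coeff_char_poly_0[OF \<Phi>(2)] by auto
  moreover have "\<epsilon> ^ (n + 1) = 1" if "coeff (char_poly \<Phi>) 0 = 0"
    by (rule singular_frobenius_block_sign[OF irr pk \<Phi>(3,4) that \<Phi>(1) eps B2])
  ultimately have "(coeff (char_poly \<Phi>) 0 \<noteq> 0 \<and> (\<forall>s\<in>{2..n+1}. a s = (if s = 2 then 1 else 0)))
      \<or> (\<epsilon> ^ (n + 1) = 1 \<and> (\<forall>s\<in>{2..n+1}. a s = (if s = n + 1 then 1 else 0)))"
    using init by (cases "coeff (char_poly \<Phi>) 0 = 0") auto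
  from signed_hankel_mat_solution[OF hom e \<Phi>(1,3,4) B1 rec this]
  show ?thesis unfolding X_def frobenius_block_eq_companion_mat[OF frob, symmetric] .
qed

theorem theorem8:
  fixes cj :: "'a::field \<Rightarrow> 'a" and \<epsilon> :: 'a and \<Phi> :: "'a mat" and n :: nat
  assumes char: "(2::'a) \<noteq> 0"
    and inv: "is_involution cj"
    and eps: "\<epsilon> = 1 \<or> \<epsilon> = -1"
    and eps_nonid: "(\<exists>a. cj a \<noteq> a) \<longrightarrow> \<epsilon> = 1"
    and frob: "frobenius_block n \<Phi>"
  shows "((\<exists>X \<in> carrier_mat n n. det X \<noteq> 0 \<and> X = star_mat cj X \<and>
              X * \<Phi> = \<epsilon> \<cdot>\<^sub>m star_mat cj (X * \<Phi>))
          \<longleftrightarrow> (char_poly \<Phi> = Polynomial.smult (\<epsilon> ^ n) (pcompose (bar_poly cj (char_poly \<Phi>)) [:0, \<epsilon>:])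
               \<and> (\<epsilon> = -1 \<longrightarrow> char_poly \<Phi> \<notin> {monom 1 (2 * k) | k. k \<ge> 1})))
       \<and> ((char_poly \<Phi> = Polynomial.smult (\<epsilon> ^ n) (pcompose (bar_poly cj (char_poly \<Phi>)) [:0, \<epsilon>:])
               \<and> (\<epsilon> = -1 \<longrightarrow> char_poly \<Phi> \<notin> {monom 1 (2 * k) | k. k \<ge> 1}))
          \<longrightarrow> (\<forall>a :: nat \<Rightarrow> 'a.
                recurrent (char_poly \<Phi>) a 2 (2 * n)
                \<and> (\<forall>i \<in> {2..n+1}. a i = (if det \<Phi> \<noteq> 0 then (if i = 2 then 1 else 0)
                                                       else (if i = n + 1 then 1 else 0)))
                \<longrightarrow> (let X = mat n n (\<lambda>(i, j). \<epsilon> ^ (i + 1) * a (i + j + 2)) in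
                      det X \<noteq> 0 \<and> X = star_mat cj X \<and>
                      X * \<Phi> = \<epsilon> \<cdot>\<^sub>m star_mat cj (X * \<Phi>))))"
proof -
  let ?B = "char_poly \<Phi> = Polynomial.smult (\<epsilon> ^ n) (pcompose (bar_poly cj (char_poly \<Phi>)) [:0, \<epsilon>:])
    \<and> (\<epsilon> = -1 \<longrightarrow> char_poly \<Phi> \<notin> {monom 1 (2 * k) | k. k \<ge> 1})"
  let ?solution = "\<lambda>X. det X \<noteq> 0 \<and> X = star_mat cj X \<and> X * \<Phi> = \<epsilon> \<cdot>\<^sub>m star_mat cj (X * \<Phi>)"
  have hom: "comm_ring_hom cj" by (rule is_involution_imp_comm_ring_hom[OF inv])
  have e: "\<epsilon> * \<epsilon> = 1" using eps by auto
  have cj_id: "cj = (\<lambda>x. x)" if "\<epsilon> = -1"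
    using eps_nonid that neg_one_neq_one[OF char] by (auto simp: fun_eq_iff)
  note solution = frobenius_block_signed_hankel_solution[OF hom eps frob, unfolded signed_hankel_mat_def]
  have "(\<exists>X \<in> carrier_mat n n. ?solution X) \<longleftrightarrow> ?B"
  proof
    assume "\<exists>X \<in> carrier_mat n n. ?solution X"
    then obtain X where "X \<in> carrier_mat n n" "?solution X" ..
    then show ?B by (intro frobenius_block_star_congruence_conditions[OF hom char e cj_id frob]) blast+
  next
    assume ?B
    let ?a = "recurrent_seq n (coeff (char_poly \<Phi>))
      (\<lambda>i. if det \<Phi> \<noteq> 0 then (if i = 2 then 1 else 0) else (if i = n + 1 then 1 else 0))"
    have "?solution (mat n n (\<lambda>(i, j). \<epsilon> ^ (i + 1) * ?a (i + j + 2)))"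
      using frobenius_block_char_poly[OF frob]
      by (intro solution[OF conjunct1[OF \<open>?B\<close>] conjunct2[OF \<open>?B\<close>]])
        (auto simp: recurrent_recurrent_seq recurrent_seq_init)
    then show "\<exists>X \<in> carrier_mat n n. ?solution X" by (rule bexI[OF _ mat_carrier])
  qed
  then show ?thesis
    unfolding Let_def by (rule conjI) (intro impI allI, elim conjE, rule solution)
qed

end
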